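(* For $n\in\mathbb Z_{\ge0}$ and $x,y\in\mathbb Z_{\ge0}$, let $p^{(1/2)}_n(x,y)$ be the probability that a simple symmetric random walk on $\mathbb Z$ started from $x$, reflected at $0$ (i.e. one considers $|S_n|$) and killed with probability $1/2$, independently, at each return to site $0$, is alive at time $n$ and located at $y$. Then $$p^{(1/2)}_n(x,y)=p_n(x-y)-p_n(x+y+2),$$ where $p_n(z)$ is the probability that a simple symmetric random walk on $\mathbb Z$ started at $0$ is at $z$ at time $n$. *)

theory Defs
  imports Complex_Main
begin

text \<open>Simple symmetric random walk on the integers over n steps: the sample space
  is the set of the 2^n equally likely step sequences with entries in {-1, 1}.\<close>

definition step_seqs :: "nat \<Rightarrow> int list set" where
  "step_seqs n = {xs. length xs = n \<and> set xs \<subseteq> {-1, 1}}"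

definition srw_pos :: "int \<Rightarrow> int list \<Rightarrow> nat \<Rightarrow> int" where
  "srw_pos x xs k = x + sum_list (take k xs)"

definition p_srw :: "nat \<Rightarrow> int \<Rightarrow> real" where
  "p_srw n z = real (card {xs \<in> step_seqs n. sum_list xs = z}) / 2 ^ n"

text \<open>p^(1/2)_n(x,y): the reflected walk |S_k| started at x, killed independently
  with probability 1/2 at each visit to 0 (at the times k < n, i.e. before each step
  out of 0), is alive at time n and located at y.  Given the path, the survival
  probability is (1/2)^(number of visits to 0 at times 0..n-1).\<close>
definition p_killed :: "nat \<Rightarrow> nat \<Rightarrow> nat \<Rightarrow> real" where
  "p_killed n x y =
     (\<Sum>xs\<in>step_seqs n.
        if \<bar>srw_pos (int x) xs n\<bar> = int y
        then (1/2) ^ card {k. k < n \<and> srw_pos (int x) xs k = 0}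
        else 0) / 2 ^ n"

end

theory Submission
  imports Defs
begin

text \<open>At the origin the killed reflected walk survives with probability 1/2 and then steps
  to 1; this is exactly how a walk on the integers absorbed at -1 behaves at 0, whose
  transition probabilities are p_n(x - y) - p_n(x + y + 2) by the reflection principle
  about -1.  Formally, both sides (weighted by 2^n) are shown to satisfy the same
  one-step recursion in the starting point, using p_n(-z) = p_n(z) at the origin.\<close>

lemma finite_step_seqs: "finite (step_seqs n)"
  using finite_lists_length_eq[of "{-1::int, 1}" n]
  by (simp add: step_seqs_def conj_commute)

lemma step_seqs_0: "step_seqs 0 = {[]}"
  unfolding step_seqs_def by auto

lemma step_seqs_Suc:
  "step_seqs (Suc n) = Cons 1 ` step_seqs n \<union> Cons (-1) ` step_seqs n"
proof
  show "step_seqs (Suc n) \<subseteq> Cons 1 ` step_seqs n \<union> Cons (-1) ` step_seqs n"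
  proof
    fix xs assume "xs \<in> step_seqs (Suc n)"
    then obtain s ys where "xs = s # ys" "s \<in> {-1, 1}" "ys \<in> step_seqs n"
      unfolding step_seqs_def by (cases xs) auto
    then show "xs \<in> Cons 1 ` step_seqs n \<union> Cons (-1) ` step_seqs n"
      by auto
  qed
qed (auto simp: step_seqs_def)

lemma sum_step_seqs_Suc:
  "(\<Sum>xs\<in>step_seqs (Suc n). f xs) =
     (\<Sum>xs\<in>step_seqs n. f (1 # xs)) + (\<Sum>xs\<in>step_seqs n. f ((-1) # xs))"
proof -
  have "(\<Sum>xs\<in>step_seqs (Suc n). f xs) =
        (\<Sum>xs\<in>Cons 1 ` step_seqs n. f xs) + (\<Sum>xs\<in>Cons (-1) ` step_seqs n. f xs)"
    unfolding step_seqs_Suc by (rule sum.union_disjoint) (auto simp: finite_step_seqs)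
  then show ?thesis
    by (simp add: sum.reindex)
qed

lemma sum_step_seqs_map_uminus:
  "(\<Sum>xs\<in>step_seqs n. f xs) = (\<Sum>xs\<in>step_seqs n. f (map uminus xs))"
  by (rule sum.reindex_bij_witness[of _ "map uminus" "map uminus"])
     (auto simp: step_seqs_def comp_def)

lemma card_step_seqs_filter:
  "card {xs \<in> step_seqs n. P xs} = (\<Sum>xs\<in>step_seqs n. if P xs then 1 else 0)"
  by (simp add: sum.inter_filter[symmetric] finite_step_seqs)

lemma srw_pos_0 [simp]: "srw_pos a xs 0 = a"
  unfolding srw_pos_def by simp

lemma srw_pos_Cons_Suc [simp]: "srw_pos a (s # xs) (Suc k) = srw_pos (a + s) xs k"
  unfolding srw_pos_def by simp

lemma sum_list_map_uminus: "sum_list (map uminus xs) = - sum_list (xs :: 'a :: ab_group_add list)"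
  by (induction xs) auto

lemma srw_pos_map_uminus [simp]: "srw_pos (-a) (map uminus xs) k = - srw_pos a xs k"
  unfolding srw_pos_def by (simp add: take_map sum_list_map_uminus)

lemma card_less_Suc_Collect:
  "card {k. k < Suc n \<and> P k} = (if P 0 then 1 else 0) + card {k. k < n \<and> P (Suc k)}"
proof -
  have "{k. k < Suc n \<and> P k} = (if P 0 then {0} else {}) \<union> Suc ` {k. k < n \<and> P (Suc k)}"
    by (auto simp: less_Suc_eq_0_disj)
  then show ?thesis
    by (simp add: card_image)
qed

lemma card_visits_Cons:
  "card {k. k < Suc n \<and> srw_pos a (s # xs) k = v} =
     (if a = v then 1 else 0) + card {k. k < n \<and> srw_pos (a + s) xs k = v}"
  by (subst card_less_Suc_Collect) simp

definition walk_count :: "nat \<Rightarrow> int \<Rightarrow> nat" where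
  "walk_count n z = card {xs \<in> step_seqs n. sum_list xs = z}"

lemma walk_count_0: "walk_count 0 z = (if z = 0 then 1 else 0)"
proof -
  have "{xs \<in> step_seqs 0. sum_list xs = z} = (if z = 0 then {[]} else {})"
    by (auto simp: step_seqs_0)
  then show ?thesis
    by (simp add: walk_count_def)
qed

lemma walk_count_Suc: "walk_count (Suc n) z = walk_count n (z - 1) + walk_count n (z + 1)"
  unfolding walk_count_def card_step_seqs_filter sum_step_seqs_Suc
  by (simp add: algebra_simps eq_diff_eq)

lemma walk_count_uminus: "walk_count n (- z) = walk_count n z"
  unfolding walk_count_def card_step_seqs_filter
  by (subst sum_step_seqs_map_uminus) (simp add: sum_list_map_uminus)

text \<open>Negative starting points are allowed because the first step from the origin may
  lead to -1.\<close>
definition killed_weight :: "nat \<Rightarrow> int \<Rightarrow> int \<Rightarrow> real" where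
  "killed_weight n a y = (\<Sum>xs\<in>step_seqs n.
     if \<bar>srw_pos a xs n\<bar> = y then (1/2) ^ card {k. k < n \<and> srw_pos a xs k = 0} else 0)"

lemma killed_weight_0: "killed_weight 0 a y = (if \<bar>a\<bar> = y then 1 else 0)"
  unfolding killed_weight_def step_seqs_0 by simp

lemma killed_weight_Suc:
  "killed_weight (Suc n) a y =
     (if a = 0 then 1/2 else 1) * (killed_weight n (a + 1) y + killed_weight n (a - 1) y)"
proof -
  have first_step:
    "(if \<bar>srw_pos a (s # xs) (Suc n)\<bar> = y
      then (1/2::real) ^ card {k. k < Suc n \<and> srw_pos a (s # xs) k = 0} else 0) =
     (if a = 0 then 1/2 else 1) *
     (if \<bar>srw_pos (a + s) xs n\<bar> = y
      then (1/2) ^ card {k. k < n \<and> srw_pos (a + s) xs k = 0} else 0)" for s xs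
    by (simp add: card_visits_Cons)
  have "killed_weight (Suc n) a y =
      (if a = 0 then 1/2 else 1) * (killed_weight n (a + 1) y + killed_weight n (a + -1) y)"
    unfolding killed_weight_def sum_step_seqs_Suc first_step
    by (simp only: sum_distrib_left distrib_left)
  then show ?thesis
    by simp
qed

lemma killed_weight_uminus: "killed_weight n (- a) y = killed_weight n a y"
  unfolding killed_weight_def by (subst sum_step_seqs_map_uminus) (simp cong: if_cong)

lemma killed_weight_eq_walk_count_diff:
  assumes "a \<ge> 0" "y \<ge> 0"
  shows "killed_weight n a y = real (walk_count n (a - y)) - real (walk_count n (a + y + 2))"
  using assms(1)
proof (induction n arbitrary: a)
  case 0
  then show ?case
    using assms(2) by (simp add: killed_weight_0 walk_count_0)
next
  case (Suc n)
  show ?case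
  proof (cases "a = 0")
    case True
    have "killed_weight n (-1) y = killed_weight n 1 y"
      using killed_weight_uminus[of n 1 y] by simp
    moreover have "walk_count n (- y - 1) = walk_count n (y + 1)"
      using walk_count_uminus[of n "y + 1"] by simp
    ultimately show ?thesis
      using True Suc.IH[of 1] by (simp add: killed_weight_Suc walk_count_Suc algebra_simps)
  next
    case False
    then show ?thesis
      using Suc.IH[of "a + 1"] Suc.IH[of "a - 1"] Suc.prems
      by (simp add: killed_weight_Suc walk_count_Suc algebra_simps)
  qed
qed

theorem proposition3p1:
  fixes n x y :: nat
  shows "p_killed n x y = p_srw n (int x - int y) - p_srw n (int x + int y + 2)"
proof -
  have "p_killed n x y = killed_weight n (int x) (int y) / 2 ^ n"
    unfolding p_killed_def killed_weight_def ..
  also have "\<dots> = (real (walk_count n (int x - int y)) - real (walk_count n (int x + int y + 2))) / 2 ^ n"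
    by (simp add: killed_weight_eq_walk_count_diff)
  finally show ?thesis
    unfolding p_srw_def walk_count_def by (simp add: diff_divide_distrib)
qed

end
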